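(* Let $\Gamma$ be a typing environment, $u$ an identifier, $\vec T$ a tuple of types and $a_1,a_2$ attributes, and suppose the environment $\Gamma, u:[\vec T]^{a_1}, u:[\vec T]^{a_2}$ is consistent, i.e., it is derivable from some typing environment $\Gamma'$ that is a partial function by applying the structural rules. Then $\Gamma, u:[\vec T]^{a_1-1}, u:[\vec T]^{a_2-1}$ is derivable from the same environment $\Gamma'$ by applying the structural rules, and is therefore consistent.
   Context: Types: $T ::= [T_1,\dots,T_n]^{a} \mid \mathsf{Proc}$ (channel type carrying an $n$-tuple of values, with usage attribute $a$; and the type of process variables). Attributes: $a ::= \mathsf{aff}$ (affine) $\mid \mathsf{un}$ (unrestricted) $\mid \bullet_i$ (unique after $i$ steps, $i\in\mathbb N$). Identifiers $u,v$ range over channel names and variables; process variables $X$ are also given types. A typing environment is a finite multiset of assumptions $u:T$ (not a priori a partial function). Type splitting $T = T_1\circ T_2$ is given by: $[\vec T]^{\mathsf{un}} = [\vec T]^{\mathsf{un}}\circ[\vec T]^{\mathsf{un}}$; $\mathsf{Proc}=\mathsf{Proc}\circ\mathsf{Proc}$; $[\vec T]^{\bullet_i} = [\vec T]^{\mathsf{aff}}\circ[\vec T]^{\bullet_{i+1}}$ (nothing else splits). Subtyping is given by the rules $\bullet_i\le\bullet_{i+1}$, $\bullet_{i+1}\le\mathsf{un}$, $\mathsf{un}\le\mathsf{aff}$, and $[\vec T]^{a_1}\le[\vec T]^{a_2}$ whenever $a_1\le a_2$. The structural rules of the type system (for judgements $\Gamma\vdash P$) are: (Contraction) if $T=T_1\circ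 T_2$ and $\Gamma,u:T_1,u:T_2\vdash P$ then $\Gamma,u:T\vdash P$; (Weakening) if $\Gamma\vdash P$ then $\Gamma,u:T\vdash P$; (Subtyping) if $\Gamma,u:T_2\vdash P$ and $T_1\le T_2$ then $\Gamma,u:T_1\vdash P$; (Revision) if $\Gamma,u:[\vec T_2]^{\bullet_0}\vdash P$ then $\Gamma,u:[\vec T_1]^{\bullet_0}\vdash P$. An environment $\Delta$ is derivable from $\Gamma'$ by applying the structural rules if $\Delta$ arises from $\Gamma'$ by finitely many of the corresponding environment transformations (reading each rule from conclusion to premise): replacing $u:T$ by $u:T_1,u:T_2$ where $T=T_1\circ T_2$; removing an assumption; replacing $u:T_1$ by $u:T_2$ where $T_1\le T_2$; replacing $u:[\vec T_1]^{\bullet_0}$ by $u:[\vec T_2]^{\bullet_0}$. An environment is consistent if it is derivable in this way from an environment that is a partial function (at most one assumption per identifier). Usage decrement: for an environment $\Gamma$, $\Gamma, u:[\vec T]^{a-1}$ denotes $\Gamma$ if $a=\mathsf{aff}$; $\Gamma,u:[\vec T]^{\mathsf{un}}$ if $a=\mathsf{un}$; and $\Gamma,u:[\vec T]^{\bullet_i}$ if $a=\bullet_{i+1}$ (it is undefined for $a=\bullet_0$). *)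

theory Defs
  imports Main "HOL-Library.Multiset"
begin

text \<open>Usage attributes: affine, unrestricted, unique after i steps.\<close>
datatype attr = Aff | Unr | Bul nat

datatype ty = Chan "ty list" attr | Proc

inductive sub_attr :: "attr \<Rightarrow> attr \<Rightarrow> bool" where
  sa_refl: "sub_attr a a"
| sa_bul: "sub_attr (Bul i) (Bul (Suc i))"
| sa_bul_un: "sub_attr (Bul (Suc i)) Unr"
| sa_un_aff: "sub_attr Unr Aff"
| sa_trans: "sub_attr a b \<Longrightarrow> sub_attr b c \<Longrightarrow> sub_attr a c"

inductive sub_ty :: "ty \<Rightarrow> ty \<Rightarrow> bool" where
  st_refl: "sub_ty T T"
| st_chan: "sub_attr a1 a2 \<Longrightarrow> sub_ty (Chan Ts a1) (Chan Ts a2)"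

text \<open>Type splitting: split T T1 T2 means T = T1 \<circ> T2.\<close>
inductive split_ty :: "ty \<Rightarrow> ty \<Rightarrow> ty \<Rightarrow> bool" where
  sp_un: "split_ty (Chan Ts Unr) (Chan Ts Unr) (Chan Ts Unr)"
| sp_proc: "split_ty Proc Proc Proc"
| sp_bul: "split_ty (Chan Ts (Bul i)) (Chan Ts Aff) (Chan Ts (Bul (Suc i)))"

type_synonym 'i env = "('i \<times> ty) multiset"

text \<open>One environment transformation (structural rules read conclusion to premise).\<close>
inductive env_step :: "'i env \<Rightarrow> 'i env \<Rightarrow> bool" where
  es_contr: "split_ty T T1 T2 \<Longrightarrow>
     env_step (G + {#(u, T)#}) (G + {#(u, T1), (u, T2)#})"
| es_weak: "env_step (G + {#x#}) G"
| es_sub: "sub_ty T1 T2 \<Longrightarrow> env_step (G + {#(u, T1)#}) (G + {#(u, T2)#})"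
| es_rev: "env_step (G + {#(u, Chan Ts1 (Bul 0))#}) (G + {#(u, Chan Ts2 (Bul 0))#})"

definition derivable :: "'i env \<Rightarrow> 'i env \<Rightarrow> bool" where
  "derivable G' D \<longleftrightarrow> env_step\<^sup>*\<^sup>* G' D"

definition partial_env :: "'i env \<Rightarrow> bool" where
  "partial_env G \<longleftrightarrow> (\<forall>u. size (filter_mset (\<lambda>p. fst p = u) G) \<le> 1)"

definition consistent :: "'i env \<Rightarrow> bool" where
  "consistent D \<longleftrightarrow> (\<exists>G'. partial_env G' \<and> derivable G' D)"

text \<open>Usage decrement of a single assumption u : [Ts]^a, as the multiset it
  contributes to the environment; None when undefined (a = bullet_0).\<close>
fun dec_assm :: "'i \<Rightarrow> ty list \<Rightarrow> attr \<Rightarrow> 'i env option" where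
  "dec_assm u Ts Aff = Some {#}"
| "dec_assm u Ts Unr = Some {#(u, Chan Ts Unr)#}"
| "dec_assm u Ts (Bul (Suc i)) = Some {#(u, Chan Ts (Bul i))#}"
| "dec_assm u Ts (Bul 0) = None"

end

theory Submission
  imports Defs
begin

text \<open>Induction on the derivation of the environment from the partial function \<open>\<Gamma>'\<close>,
  with the invariant that every pair of channel assumptions on one identifier can be
  decremented while staying derivable from \<open>\<Gamma>'\<close>. A partial function contains no such
  pair, so the base case is vacuous. If the last rule did not produce a member of the pair, it
  can be replayed after decrementing. Otherwise decrementing commutes with the rule up to
  further structural steps; e.g. splitting \<open>\<bullet>(i+1)\<close> into \<open>aff\<close> and \<open>\<bullet>(i+2)\<close> is matched by
  decrementing \<open>\<bullet>(i+1)\<close> to \<open>\<bullet>i\<close> and subtyping it to \<open>\<bullet>(i+2)\<close>. Revision produces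
  \<open>\<bullet>0\<close>, whose decrement is undefined, but then the invariant already fails for the
  environment it was applied to.\<close>

lemma add_mset_eq_add_pairE:
  assumes "add_mset y G = K + {#p, q#}"
  obtains "y = p" "G = add_mset q K" | "y = q" "G = add_mset p K"
    | H where "G = H + {#p, q#}" "K = add_mset y H"
proof -
  have "add_mset y G = add_mset q (add_mset p K)" using assms by (simp add: add_mset_commute)
  then show thesis
    by (auto simp: add_eq_conv_ex add_mset_commute intro: that)
qed

lemma add_mset_add_mset_eq_add_pairE:
  assumes "add_mset y1 (add_mset y2 G) = K + {#p, q#}"
  obtains "y1 = p" "y2 = q" "G = K" | "y1 = q" "y2 = p" "G = K"
    | H where "y1 = p" "G = add_mset q H" "K = add_mset y2 H"
    | H where "y1 = q" "G = add_mset p H" "K = add_mset y2 H"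
    | H where "y2 = p" "G = add_mset q H" "K = add_mset y1 H"
    | H where "y2 = q" "G = add_mset p H" "K = add_mset y1 H"
    | H where "G = H + {#p, q#}" "K = add_mset y1 (add_mset y2 H)"
  using assms
proof (cases rule: add_mset_eq_add_pairE)
  case 1
  then show thesis using that(1,3) by (auto simp: add_eq_conv_ex)
next
  case 2
  then show thesis using that(2,4) by (auto simp: add_eq_conv_ex)
next
  case (3 H)
  from 3(1) show thesis
    by (cases rule: add_mset_eq_add_pairE) (use 3(2) that(5-7) in auto)
qed

lemma env_step_frame:
  assumes "env_step A B"
  shows "env_step (C + A) (C + B)"
  using assms
proof cases
  case (es_contr T T1 T2 G u)
  then show ?thesis using env_step.es_contr[of T T1 T2 "C + G" u] by (simp add: ac_simps)
next
  case (es_weak x)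
  then show ?thesis using env_step.es_weak[of "C + B" x] by (simp add: ac_simps)
next
  case (es_sub T1 T2 G u)
  then show ?thesis using env_step.es_sub[of T1 T2 "C + G" u] by (simp add: ac_simps)
next
  case (es_rev G u Ts1 Ts2)
  then show ?thesis using env_step.es_rev[of "C + G" u Ts1 Ts2] by (simp add: ac_simps)
qed

lemma env_step_split_single: "split_ty T T1 T2 \<Longrightarrow> env_step {#(u, T)#} {#(u, T1), (u, T2)#}"
  using es_contr[of T T1 T2 "{#}"] by simp

lemma env_step_sub_single: "sub_ty T1 T2 \<Longrightarrow> env_step {#(u, T1)#} {#(u, T2)#}"
  using es_sub[of T1 T2 "{#}"] by simp

lemma env_steps_frame: "env_step\<^sup>*\<^sup>* A B \<Longrightarrow> env_step\<^sup>*\<^sup>* (C + A) (C + B)"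
  by (induction rule: rtranclp_induct) (auto intro: rtranclp.rtrancl_into_rtrancl env_step_frame)

lemma env_steps_weaken: "env_step\<^sup>*\<^sup>* (A + B) A"
proof (induction B)
  case (add x B)
  then show ?case using es_weak[of "A + B" x] by (simp add: converse_rtranclp_into_rtranclp)
qed simp

lemma sub_attr_Bul_mono: "i \<le> j \<Longrightarrow> sub_attr (Bul i) (Bul j)"
proof (induction j rule: dec_induct)
  case base show ?case by (rule sa_refl)
next
  case (step n) then show ?case using sa_bul sa_trans by blast
qed

lemma sub_attr_Bul_Unr: "sub_attr (Bul i) Unr"
  using sa_bul sa_bul_un sa_trans by blast

lemma sub_attrE:
  assumes "sub_attr a b"
  obtains "b = Aff" | "b = Unr" "a \<noteq> Aff" | i j where "a = Bul i" "b = Bul j" "i \<le> j"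
proof -
  have "b = Aff \<or> b = Unr \<and> a \<noteq> Aff \<or> (\<exists>i j. a = Bul i \<and> b = Bul j \<and> i \<le> j)"
    using assms
  proof (induction rule: sub_attr.induct)
    case (sa_refl a) then show ?case by (cases a) auto
  qed auto
  then show thesis using that by blast
qed

definition retype :: "ty \<Rightarrow> ty \<Rightarrow> bool" where
  "retype T1 T2 \<longleftrightarrow> sub_ty T1 T2 \<or> (\<exists>Ts1 Ts2. T1 = Chan Ts1 (Bul 0) \<and> T2 = Chan Ts2 (Bul 0))"

lemma env_step_retype: "retype T1 T2 \<Longrightarrow> env_step {#(v, T1)#} {#(v, T2)#}"
  unfolding retype_def using env_step_sub_single es_rev[of "{#}"] by auto

lemma sub_ty_ChanE:
  assumes "sub_ty T (Chan Ts a)"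
  obtains c where "T = Chan Ts c" "sub_attr c a"
  using assms by (cases rule: sub_ty.cases) (auto intro: sa_refl that)

lemma retype_ChanE:
  assumes "retype T (Chan Ts a)"
  obtains Ts' c where "T = Chan Ts' c" "Ts' = Ts \<and> sub_attr c a \<or> c = Bul 0"
  using assms unfolding retype_def by (auto elim: sub_ty_ChanE intro: that)

lemma dec_assm_retype:
  assumes "retype (Chan Ts c) (Chan Ts' a)" "dec_assm u Ts c = Some M"
  shows "\<exists>M'. dec_assm u Ts' a = Some M' \<and> env_step\<^sup>*\<^sup>* M M'"
proof -
  have "c \<noteq> Bul 0" using assms(2) by auto
  then have sub: "Ts' = Ts" "sub_attr c a"
    using assms(1) by (auto elim: retype_ChanE)
  show ?thesis
    using sub(2)
  proof (cases rule: sub_attrE)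
    case 1
    then show ?thesis using env_steps_weaken[of "{#}" M] by simp
  next
    case 2
    show ?thesis
    proof (cases c)
      case (Bul n)
      then obtain i where "n = Suc i" using assms(2) by (cases n) auto
      moreover have "env_step {#(u, Chan Ts (Bul i))#} {#(u, Chan Ts Unr)#}"
        by (rule env_step_sub_single[OF st_chan[OF sub_attr_Bul_Unr]])
      ultimately show ?thesis using Bul 2 sub assms(2) by auto
    qed (use 2 sub assms(2) in auto)
  next
    case (3 i j)
    then obtain i' j' where "i = Suc i'" "j = Suc j'" "i' \<le> j'"
      using assms(2) by (cases i; cases j) auto
    moreover from \<open>i' \<le> j'\<close> have "env_step {#(u, Chan Ts (Bul i'))#} {#(u, Chan Ts (Bul j'))#}"
      by (intro env_step_sub_single st_chan sub_attr_Bul_mono)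
    ultimately show ?thesis using 3 sub assms(2) by auto
  qed
qed

lemma dec_assm_split:
  assumes "split_ty (Chan Ts a) T1 T2" "dec_assm u Ts a = Some M"
    and "T1 = Chan Ts' a' \<and> T' = T2 \<or> T2 = Chan Ts' a' \<and> T' = T1"
  shows "\<exists>M'. dec_assm u Ts' a' = Some M' \<and> env_step\<^sup>*\<^sup>* M (M' + {#(u, T')#})"
  using assms(1)
proof cases
  case sp_un
  moreover have "env_step {#(u, Chan Ts Unr)#} {#(u, Chan Ts Unr), (u, Chan Ts Unr)#}"
    by (rule env_step_split_single[OF split_ty.sp_un])
  ultimately show ?thesis
    using assms(2,3) by auto
next
  case (sp_bul i)
  then obtain i' where i: "i = Suc i'" using assms(2) by (cases i) auto
  have "env_step {#(u, Chan Ts (Bul i'))#} {#(u, Chan Ts (Bul (Suc (Suc i'))))#}"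
    by (rule env_step_sub_single[OF st_chan[OF sub_attr_Bul_mono]]) simp
  moreover have "env_step {#(u, Chan Ts (Bul i'))#} {#(u, Chan Ts Aff), (u, Chan Ts (Bul (Suc i')))#}"
    by (rule env_step_split_single[OF split_ty.sp_bul])
  ultimately show ?thesis
    using sp_bul i assms(2,3) by (auto simp: add_mset_commute)
qed

lemma dec_assm_split_both:
  assumes "split_ty T (Chan Ts1 a1) (Chan Ts2 a2)"
  shows "\<exists>M1 M2. dec_assm u Ts1 a1 = Some M1 \<and> dec_assm u Ts2 a2 = Some M2 \<and>
           env_step\<^sup>*\<^sup>* {#(u, T)#} (M1 + M2)"
  using assms
proof cases
  case sp_un
  moreover have "env_step {#(u, Chan Ts1 Unr)#} {#(u, Chan Ts1 Unr), (u, Chan Ts1 Unr)#}"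
    by (rule env_step_split_single[OF split_ty.sp_un])
  ultimately show ?thesis by auto
qed auto

definition decrement_derivable ::
    "'i env \<Rightarrow> 'i env \<Rightarrow> 'i \<Rightarrow> ty list \<Rightarrow> attr \<Rightarrow> ty list \<Rightarrow> attr \<Rightarrow> bool" where
  "decrement_derivable G' K u Ts1 a1 Ts2 a2 \<longleftrightarrow>
     (\<exists>M1 M2. dec_assm u Ts1 a1 = Some M1 \<and> dec_assm u Ts2 a2 = Some M2 \<and>
        env_step\<^sup>*\<^sup>* G' (K + M1 + M2))"

definition pairs_decrementable :: "'i env \<Rightarrow> 'i env \<Rightarrow> bool" where
  "pairs_decrementable G' D \<longleftrightarrow>
     (\<forall>K u Ts1 a1 Ts2 a2. D = K + {#(u, Chan Ts1 a1), (u, Chan Ts2 a2)#} \<longrightarrow>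
        decrement_derivable G' K u Ts1 a1 Ts2 a2)"

lemma decrement_derivable_commute:
  "decrement_derivable G' K u Ts1 a1 Ts2 a2 \<Longrightarrow> decrement_derivable G' K u Ts2 a2 Ts1 a1"
  unfolding decrement_derivable_def by (auto simp: ac_simps)

lemma pairs_decrementableD:
  "pairs_decrementable G' (K + {#(u, Chan Ts1 a1), (u, Chan Ts2 a2)#}) \<Longrightarrow>
     decrement_derivable G' K u Ts1 a1 Ts2 a2"
  unfolding pairs_decrementable_def by blast

lemma not_partial_env_pair: "\<not> partial_env (K + {#(u, T1), (u, T2)#})"
proof
  assume "partial_env (K + {#(u, T1), (u, T2)#})"
  then have "size (filter_mset (\<lambda>p. fst p = u) (K + {#(u, T1), (u, T2)#})) \<le> 1"
    unfolding partial_env_def by blast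
  then show False by simp
qed

lemma pairs_decrementable_partial_env:
  assumes "partial_env G'"
  shows "pairs_decrementable G' G'"
  unfolding pairs_decrementable_def
proof (intro allI impI)
  fix K u Ts1 a1 Ts2 a2
  assume "G' = K + {#(u, Chan Ts1 a1), (u, Chan Ts2 a2)#}"
  then show "decrement_derivable G' K u Ts1 a1 Ts2 a2"
    using assms not_partial_env_pair by metis
qed

lemma decrement_derivable_frame:
  assumes "pairs_decrementable G' (C + A + {#(u, Chan Ts1 a1), (u, Chan Ts2 a2)#})"
    and "env_step A B"
  shows "decrement_derivable G' (C + B) u Ts1 a1 Ts2 a2"
proof -
  obtain M1 M2 where M: "dec_assm u Ts1 a1 = Some M1" "dec_assm u Ts2 a2 = Some M2"
      "env_step\<^sup>*\<^sup>* G' (C + A + M1 + M2)"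
    using pairs_decrementableD[OF assms(1)] unfolding decrement_derivable_def by blast
  have "env_step (C + A + M1 + M2) (C + B + M1 + M2)"
    using env_step_frame[OF assms(2), of "C + M1 + M2"] by (simp add: ac_simps)
  with M(3) have "env_step\<^sup>*\<^sup>* G' (C + B + M1 + M2)"
    by (rule rtranclp.rtrancl_into_rtrancl)
  then show ?thesis
    using M(1,2) unfolding decrement_derivable_def by blast
qed

text \<open>The member \<open>[Ts]\<^sup>c\<close> of a pair has been replaced by \<open>[Ts1]\<^sup>a\<^sup>1\<close> together with
  leftover assumptions \<open>B\<close>.\<close>

lemma decrement_derivable_touched:
  assumes "pairs_decrementable G' (H + {#(u, Chan Ts c), (u, Chan Ts2 a2)#})"
    and "\<And>M. dec_assm u Ts c = Some M \<Longrightarrow>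
           \<exists>M1. dec_assm u Ts1 a1 = Some M1 \<and> env_step\<^sup>*\<^sup>* M (M1 + B)"
  shows "decrement_derivable G' (H + B) u Ts1 a1 Ts2 a2"
proof -
  obtain M M2 where M: "dec_assm u Ts c = Some M" "dec_assm u Ts2 a2 = Some M2"
      "env_step\<^sup>*\<^sup>* G' (H + M + M2)"
    using pairs_decrementableD[OF assms(1)] unfolding decrement_derivable_def by blast
  obtain M1 where M1: "dec_assm u Ts1 a1 = Some M1" "env_step\<^sup>*\<^sup>* M (M1 + B)"
    using assms(2)[OF M(1)] by blast
  have "env_step\<^sup>*\<^sup>* (H + M + M2) (H + B + M1 + M2)"
    using env_steps_frame[OF M1(2), of "H + M2"] by (simp add: ac_simps)
  with M(3) have "env_step\<^sup>*\<^sup>* G' (H + B + M1 + M2)"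
    by (rule rtranclp_trans)
  then show ?thesis
    using M1(1) M(2) unfolding decrement_derivable_def by blast
qed

lemma decrement_derivable_retype_touched:
  assumes "pairs_decrementable G' (H + {#(u, T), (u, Chan Ts2 a2)#})"
    and "retype T (Chan Ts1 a1)"
  shows "decrement_derivable G' H u Ts1 a1 Ts2 a2"
proof -
  obtain Ts c where T: "T = Chan Ts c"
    using assms(2) by (rule retype_ChanE)
  have "decrement_derivable G' (H + {#}) u Ts1 a1 Ts2 a2"
  proof (rule decrement_derivable_touched)
    show "pairs_decrementable G' (H + {#(u, Chan Ts c), (u, Chan Ts2 a2)#})"
      using assms(1) T by simp
    show "\<exists>M1. dec_assm u Ts1 a1 = Some M1 \<and> env_step\<^sup>*\<^sup>* M (M1 + {#})"
      if "dec_assm u Ts c = Some M" for M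
      using assms(2) unfolding T by (simp add: dec_assm_retype[OF _ that])
  qed
  then show ?thesis by simp
qed

lemma decrement_derivable_split_touched:
  assumes "pairs_decrementable G' (H + {#(u, T), (u, Chan Ts2 a2)#})"
    and "split_ty T T1 T2" "T1 = Chan Ts1 a1 \<and> T' = T2 \<or> T2 = Chan Ts1 a1 \<and> T' = T1"
  shows "decrement_derivable G' (add_mset (u, T') H) u Ts1 a1 Ts2 a2"
proof -
  obtain Ts c where T: "T = Chan Ts c"
    using assms(2,3) by (cases rule: split_ty.cases) auto
  have "decrement_derivable G' (H + {#(u, T')#}) u Ts1 a1 Ts2 a2"
  proof (rule decrement_derivable_touched)
    show "pairs_decrementable G' (H + {#(u, Chan Ts c), (u, Chan Ts2 a2)#})"
      using assms(1) T by simp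
    show "\<exists>M1. dec_assm u Ts1 a1 = Some M1 \<and> env_step\<^sup>*\<^sup>* M (M1 + {#(u, T')#})"
      if "dec_assm u Ts c = Some M" for M
      using assms(2) unfolding T by (rule dec_assm_split[OF _ that assms(3)])
  qed
  then show ?thesis by simp
qed

lemma decrement_derivable_split_both:
  assumes "env_step\<^sup>*\<^sup>* G' (add_mset (u, T) K)" "split_ty T (Chan Ts1 a1) (Chan Ts2 a2)"
  shows "decrement_derivable G' K u Ts1 a1 Ts2 a2"
proof -
  obtain M1 M2 where M: "dec_assm u Ts1 a1 = Some M1" "dec_assm u Ts2 a2 = Some M2"
      "env_step\<^sup>*\<^sup>* {#(u, T)#} (M1 + M2)"
    using dec_assm_split_both[OF assms(2), where u = u] by blast
  have "env_step\<^sup>*\<^sup>* (add_mset (u, T) K) (K + M1 + M2)"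
    using env_steps_frame[OF M(3), of K] by (simp add: add.assoc)
  with assms(1) have "env_step\<^sup>*\<^sup>* G' (K + M1 + M2)"
    by (rule rtranclp_trans)
  then show ?thesis
    using M(1,2) unfolding decrement_derivable_def by blast
qed

lemma pairs_decrementable_weaken:
  assumes "pairs_decrementable G' (add_mset x D)"
  shows "pairs_decrementable G' D"
  unfolding pairs_decrementable_def
proof (intro allI impI)
  fix K u Ts1 a1 Ts2 a2
  assume "D = K + {#(u, Chan Ts1 a1), (u, Chan Ts2 a2)#}"
  with assms have "pairs_decrementable G' (K + {#x#} + {#(u, Chan Ts1 a1), (u, Chan Ts2 a2)#})"
    by (simp add: add_mset_commute)
  from decrement_derivable_frame[OF this es_weak[of "{#}" x, simplified]]
  show "decrement_derivable G' K u Ts1 a1 Ts2 a2" by simp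
qed

lemma pairs_decrementable_retype:
  assumes "pairs_decrementable G' (add_mset (v, T1) G)" "retype T1 T2"
  shows "pairs_decrementable G' (add_mset (v, T2) G)"
  unfolding pairs_decrementable_def
proof (intro allI impI)
  fix K u Ts1 a1 Ts2 a2
  assume D: "add_mset (v, T2) G = K + {#(u, Chan Ts1 a1), (u, Chan Ts2 a2)#}"
  have touched: "decrement_derivable G' K u Tsa a Tsb b"
    if "(v, T2) = (u, Chan Tsa a)" "G = add_mset (u, Chan Tsb b) K" for Tsa a Tsb b
  proof -
    have "pairs_decrementable G' (K + {#(u, T1), (u, Chan Tsb b)#})"
      using assms(1) that by (simp add: add_mset_commute)
    moreover have "retype T1 (Chan Tsa a)"
      using assms(2) that(1) by simp
    ultimately show ?thesis
      by (rule decrement_derivable_retype_touched)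
  qed
  from D show "decrement_derivable G' K u Ts1 a1 Ts2 a2"
  proof (cases rule: add_mset_eq_add_pairE)
    case 1
    then show ?thesis by (rule touched)
  next
    case 2
    then show ?thesis by (rule decrement_derivable_commute[OF touched])
  next
    case (3 H)
    with assms(1) have "pairs_decrementable G'
        (H + {#(v, T1)#} + {#(u, Chan Ts1 a1), (u, Chan Ts2 a2)#})"
      by (simp add: add_mset_commute)
    from decrement_derivable_frame[OF this env_step_retype[OF assms(2)]]
    show ?thesis using 3 by simp
  qed
qed

lemma pairs_decrementable_split:
  assumes "env_step\<^sup>*\<^sup>* G' (add_mset (v, T) G)" "pairs_decrementable G' (add_mset (v, T) G)"
    and "split_ty T T1 T2"
  shows "pairs_decrementable G' (add_mset (v, T1) (add_mset (v, T2) G))"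
  unfolding pairs_decrementable_def
proof (intro allI impI)
  fix K u Ts1 a1 Ts2 a2
  assume D: "add_mset (v, T1) (add_mset (v, T2) G) = K + {#(u, Chan Ts1 a1), (u, Chan Ts2 a2)#}"
  have both: "decrement_derivable G' K u Tsa a Tsb b"
    if "(v, T1) = (u, Chan Tsa a)" "(v, T2) = (u, Chan Tsb b)" "G = K" for Tsa a Tsb b
    using decrement_derivable_split_both assms(1,3) that by simp
  have touched: "decrement_derivable G' (add_mset (v, T') H) u Tsa a Tsb b"
    if "(v, T1) = (u, Chan Tsa a) \<and> T' = T2 \<or> (v, T2) = (u, Chan Tsa a) \<and> T' = T1"
      and "G = add_mset (u, Chan Tsb b) H" for Tsa a T' Tsb b H
  proof -
    have "pairs_decrementable G' (H + {#(u, T), (u, Chan Tsb b)#})"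
      using assms(2) that by (auto simp: add_mset_commute)
    from decrement_derivable_split_touched[OF this assms(3)]
    show ?thesis using that(1) by auto
  qed
  from D show "decrement_derivable G' K u Ts1 a1 Ts2 a2"
  proof (cases rule: add_mset_add_mset_eq_add_pairE)
    case 1
    then show ?thesis by (intro both)
  next
    case 2
    then show ?thesis by (intro decrement_derivable_commute[OF both])
  next
    case (3 H)
    then show ?thesis using touched[of Ts1 a1 T2 Ts2 a2 H] by simp
  next
    case (4 H)
    then show ?thesis using touched[of Ts2 a2 T2 Ts1 a1 H] by (simp add: decrement_derivable_commute)
  next
    case (5 H)
    then show ?thesis using touched[of Ts1 a1 T1 Ts2 a2 H] by simp
  next
    case (6 H)
    then show ?thesis using touched[of Ts2 a2 T1 Ts1 a1 H] by (simp add: decrement_derivable_commute)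
  next
    case (7 H)
    with assms(2) have "pairs_decrementable G'
        (H + {#(v, T)#} + {#(u, Chan Ts1 a1), (u, Chan Ts2 a2)#})"
      by (simp add: add_mset_commute)
    from decrement_derivable_frame[OF this env_step_split_single[OF assms(3)]]
    show ?thesis using 7 by (simp add: add_mset_commute)
  qed
qed

lemma pairs_decrementable_derivable:
  assumes "partial_env G'" "env_step\<^sup>*\<^sup>* G' D"
  shows "pairs_decrementable G' D"
  using assms(2)
proof (induction rule: rtranclp_induct)
  case base
  then show ?case using assms(1) by (rule pairs_decrementable_partial_env)
next
  case (step E D)
  from step.hyps(2) show ?case
  proof cases
    case (es_contr T T1 T2 G v)
    then show ?thesis
      using pairs_decrementable_split[of G' v T G T1 T2] step by simp
  next
    case (es_weak x)
    then show ?thesis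
      using pairs_decrementable_weaken[of G' x D] step.IH by simp
  next
    case (es_sub T1 T2 G v)
    then show ?thesis
      using pairs_decrementable_retype[of G' v T1 G T2] step.IH by (simp add: retype_def)
  next
    case (es_rev G v Ts1 Ts2)
    then show ?thesis
      using pairs_decrementable_retype[of G' v "Chan Ts1 (Bul 0)" G "Chan Ts2 (Bul 0)"] step.IH
      by (simp add: retype_def)
  qed
qed

theorem mainTheorem1:
  fixes G G' :: "'i env" and u :: 'i and Ts :: "ty list" and a1 a2 :: attr
  assumes "partial_env G'"
      and "derivable G' (G + {#(u, Chan Ts a1)#} + {#(u, Chan Ts a2)#})"
  shows "\<exists>M1 M2. dec_assm u Ts a1 = Some M1 \<and> dec_assm u Ts a2 = Some M2 \<and>
           derivable G' (G + M1 + M2) \<and> consistent (G + M1 + M2)"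
proof -
  have "pairs_decrementable G' (G + {#(u, Chan Ts a1), (u, Chan Ts a2)#})"
    using assms pairs_decrementable_derivable unfolding derivable_def by (simp add: add_mset_commute)
  then have "decrement_derivable G' G u Ts a1 Ts a2"
    by (rule pairs_decrementableD)
  then show ?thesis
    using assms(1) unfolding decrement_derivable_def derivable_def consistent_def by blast
qed

end
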